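(* Let $n\ge5$ and let $R\in\mathcal C_{1,0}$. Then $R$ lies in the PIC2 cone. Moreover, if $\mathrm{Ric}(R)(v,v)=0$ for some unit vector $v\in\mathbb{R}^n$, then $R=c\,(\mathrm{id}-2\,v\otimes v)\odot\mathrm{id}$ for some constant $c\ge0$ (i.e. either $R=0$ or $R$ is the curvature tensor of a round cylinder $S^{n-1}\times\mathbb{R}$ with axis $v$).
   Context: An algebraic curvature tensor on $\mathbb{R}^n$ is a tensor $R=(R_{ijkl})$ with $R_{ijkl}=-R_{jikl}=R_{klij}$ and $R_{ijkl}+R_{jkil}+R_{kijl}=0$; the unit round sphere has $R_{ijkl}=\delta_{ik}\delta_{jl}-\delta_{il}\delta_{jk}$. We write $\mathrm{Ric}(R)_{ik}=\sum_j R_{ijkj}$, $\mathrm{scal}(R)=\sum_i\mathrm{Ric}(R)_{ii}$, $\mathrm{Ric}_0(R)=\mathrm{Ric}(R)-\frac1n\mathrm{scal}(R)\,\mathrm{id}$. For symmetric bilinear forms $A,B$, $(A\odot B)_{ijkl}=A_{ik}B_{jl}-A_{il}B_{jk}-A_{jk}B_{il}+A_{jl}B_{ik}$; $\mathrm{id}=(\delta_{ij})$. The PIC2 cone is the set of algebraic curvature tensors $R$ with $R(z,w,\bar z,\bar w)\ge0$ for all $z,w\in\mathbb{C}^n$ ($R$ extended complex-multilinearly). For $\sigma\in(0,2]$ and $\theta\ge0$, $\mathcal{C}_{\sigma,\theta}$ denotes the set of algebraic curvature tensors $R$ that can be written $R=S+H\odot\mathrm{id}$, where $S$ is an algebraic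 curvature tensor in the PIC2 cone with $\mathrm{Ric}_0(S)=0$ and $H$ is a symmetric bilinear form with $\mathrm{tr}(H)\,\mathrm{id}-(n-2\sigma)H$ positive semidefinite and $\mathrm{tr}(H)-\theta\,\mathrm{scal}(S)\ge0$. *)

theory Defs
  imports Complex_Main "HOL-Library.Cardinality"
begin

text \<open>Tensors on R^n are indexed by a finite type 'n (n = CARD('n)).
  A 4-tensor is a function 'n => 'n => 'n => 'n => real, a bilinear form
  is 'n => 'n => real, a vector is 'n => real.\<close>

type_synonym 'n tensor4 = "'n \<Rightarrow> 'n \<Rightarrow> 'n \<Rightarrow> 'n \<Rightarrow> real"
type_synonym 'n bilin = "'n \<Rightarrow> 'n \<Rightarrow> real"

definition alg_curv :: "('n::finite) tensor4 \<Rightarrow> bool" where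
  "alg_curv R \<longleftrightarrow>
     (\<forall>i j k l. R i j k l = - R j i k l) \<and>
     (\<forall>i j k l. R i j k l = R k l i j) \<and>
     (\<forall>i j k l. R i j k l + R j k i l + R k i j l = 0)"

definition kd :: "'n \<Rightarrow> 'n \<Rightarrow> real" where
  "kd i j = (if i = j then 1 else 0)"

definition idf :: "('n::finite) bilin" where
  "idf = kd"

definition Ric :: "('n::finite) tensor4 \<Rightarrow> 'n bilin" where
  "Ric R = (\<lambda>i k. \<Sum>j\<in>UNIV. R i j k j)"

definition scal :: "('n::finite) tensor4 \<Rightarrow> real" where
  "scal R = (\<Sum>i\<in>UNIV. Ric R i i)"

definition Ric0 :: "('n::finite) tensor4 \<Rightarrow> 'n bilin" where
  "Ric0 R = (\<lambda>i k. Ric R i k - scal R / real (card (UNIV::'n set)) * idf i k)"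

definition KN :: "('n::finite) bilin \<Rightarrow> 'n bilin \<Rightarrow> 'n tensor4" (infixl "\<odot>" 70) where
  "A \<odot> B = (\<lambda>i j k l. A i k * B j l - A i l * B j k - A j k * B i l + A j l * B i k)"

definition tr :: "('n::finite) bilin \<Rightarrow> real" where
  "tr A = (\<Sum>i\<in>UNIV. A i i)"

definition sym_form :: "('n::finite) bilin \<Rightarrow> bool" where
  "sym_form A \<longleftrightarrow> (\<forall>i j. A i j = A j i)"

definition psd :: "('n::finite) bilin \<Rightarrow> bool" where
  "psd A \<longleftrightarrow> (\<forall>x::'n \<Rightarrow> real. (\<Sum>i\<in>UNIV. \<Sum>j\<in>UNIV. A i j * x i * x j) \<ge> 0)"

text \<open>Complex-multilinear extension R(z,w,conj z,conj w). For algebraic curvature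
  tensors this value is automatically real; PIC2 asks it to be nonnegative.\<close>
definition curv_cx :: "('n::finite) tensor4 \<Rightarrow> ('n \<Rightarrow> complex) \<Rightarrow> ('n \<Rightarrow> complex) \<Rightarrow> complex" where
  "curv_cx R z w = (\<Sum>i\<in>UNIV. \<Sum>j\<in>UNIV. \<Sum>k\<in>UNIV. \<Sum>l\<in>UNIV.
      complex_of_real (R i j k l) * z i * w j * cnj (z k) * cnj (w l))"

definition PIC2 :: "('n::finite) tensor4 set" where
  "PIC2 = {R. alg_curv R \<and>
     (\<forall>z w. Im (curv_cx R z w) = 0 \<and> Re (curv_cx R z w) \<ge> 0)}"

definition C_cone :: "real \<Rightarrow> real \<Rightarrow> ('n::finite) tensor4 set" where
  "C_cone \<sigma> \<theta> = {R. \<exists>S H. alg_curv S \<and> S \<in> PIC2 \<and> Ric0 S = (\<lambda>i k. 0) \<and>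
       sym_form H \<and>
       psd (\<lambda>i j. tr H * idf i j - (real (card (UNIV::'n set)) - 2 * \<sigma>) * H i j) \<and>
       tr H - \<theta> * scal S \<ge> 0 \<and>
       R = (\<lambda>i j k l. S i j k l + (H \<odot> idf) i j k l)}"

end

theory Submission
  imports Defs "HOL-Library.Complex_Order"
begin

text \<open>
  For a symmetric form \<open>H\<close> one computes \<open>(H \<odot> id)(z, w, z\<^sup>*, w\<^sup>*) = \<Sum> H\<^sub>i\<^sub>k G\<^sub>i\<^sub>k\<close>, where \<open>G\<close>
  is the Gram determinant \<open>\<gamma>\<close> of \<open>z, w\<close> times the orthogonal projection onto their span.
  With \<open>T = tr H \<cdot> id - (n - 2) H\<close> this becomes
  \<open>(n - 2) (H \<odot> id)(z, w, z\<^sup>*, w\<^sup>*) = \<Sum> T\<^sub>i\<^sub>k K\<^sub>i\<^sub>k\<close> with \<open>K = \<gamma> \<cdot> id - G\<close>; as \<open>K\<close> is \<open>\<gamma>\<close> times a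
  projection and \<open>T\<close> is positive semidefinite, this is nonnegative. Hence \<open>H \<odot> id\<close>, and with it
  \<open>R = S + H \<odot> id\<close>, lies in PIC2.

  PIC2 tensors have positive semidefinite Jacobi operators, so nonnegative Ricci curvature.
  If \<open>Ric(R)(v, v) = 0\<close>, both summands are Ricci-null at \<open>v\<close>. The Einstein tensor \<open>S\<close> is then
  Ricci-flat, so all its Jacobi operators are positive semidefinite with trace zero, and
  \<open>S = 0\<close>. The Jacobi operator of \<open>H \<odot> id\<close> in direction \<open>v\<close> vanishes, which forces
  \<open>H = c \<cdot> id + u \<otimes> v + v \<otimes> u - 2c \<cdot> v \<otimes> v\<close> with \<open>u \<perp> v\<close>; positivity of \<open>T\<close> on \<open>u + s v\<close>
  for all \<open>s\<close> then gives \<open>u = 0\<close> and \<open>c \<ge> 0\<close>.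
\<close>

lemma kd_sym: "kd i j = kd j i"
  by (simp add: kd_def)

lemma kd_same [simp]: "kd i i = 1"
  by (simp add: kd_def)

lemma sum_kd_left [simp]:
  fixes f :: "'n::finite \<Rightarrow> 'a::real_algebra_1"
  shows "(\<Sum>k\<in>UNIV. of_real (kd i k) * f k) = f i"
    and "(\<Sum>k\<in>UNIV. of_real (kd k i) * f k) = f i"
proof -
  have "\<And>k. of_real (kd i k) * f k = (if i = k then f k else 0)"
    by (simp add: kd_def)
  then show "(\<Sum>k\<in>UNIV. of_real (kd i k) * f k) = f i"
    by simp
  then show "(\<Sum>k\<in>UNIV. of_real (kd k i) * f k) = f i"
    by (simp add: kd_sym)
qed

lemma sum_kd_right [simp]:
  fixes f :: "'n::finite \<Rightarrow> 'a::real_algebra_1"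
  shows "(\<Sum>k\<in>UNIV. f k * of_real (kd i k)) = f i"
    and "(\<Sum>k\<in>UNIV. f k * of_real (kd k i)) = f i"
proof -
  have "\<And>k. f k * of_real (kd i k) = (if i = k then f k else 0)"
    by (simp add: kd_def)
  then show "(\<Sum>k\<in>UNIV. f k * of_real (kd i k)) = f i"
    by simp
  then show "(\<Sum>k\<in>UNIV. f k * of_real (kd k i)) = f i"
    by (simp add: kd_sym)
qed

lemmas sum_kd_left_real [simp] = sum_kd_left[where 'a=real, simplified]
lemmas sum_kd_right_real [simp] = sum_kd_right[where 'a=real, simplified]

definition form_app :: "('n::finite) bilin \<Rightarrow> ('n \<Rightarrow> real) \<Rightarrow> ('n \<Rightarrow> real) \<Rightarrow> real" where
  "form_app A x y = (\<Sum>i\<in>UNIV. \<Sum>j\<in>UNIV. A i j * x i * y j)"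

lemma psd_iff_form_app: "psd A \<longleftrightarrow> (\<forall>x. 0 \<le> form_app A x x)"
  unfolding psd_def form_app_def ..

lemma form_app_sym: "sym_form A \<Longrightarrow> form_app A x y = form_app A y x"
  unfolding sym_form_def form_app_def by (subst sum.swap) (simp add: mult_ac)

lemma form_app_kd [simp]: "form_app A (\<lambda>i. kd a i) (\<lambda>i. kd b i) = A a b"
  unfolding form_app_def by (simp add: mult.commute)

lemma form_app_add_scaled:
  "form_app A (\<lambda>k. x k + t * y k) (\<lambda>k. x k + t * y k)
    = form_app A x x + t * (form_app A x y + form_app A y x) + t * t * form_app A y y"
  unfolding form_app_def by (simp add: algebra_simps sum.distrib sum_distrib_left)

lemma form_app_outer: "form_app (\<lambda>j l. a j * b l) x y = (\<Sum>j\<in>UNIV. a j * x j) * (\<Sum>l\<in>UNIV. b l * y l)"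
  unfolding form_app_def sum_product by (simp add: mult_ac)

lemma form_app_scaled: "form_app (\<lambda>i k. a * A i k) x y = a * form_app A x y"
  unfolding form_app_def by (simp add: sum_distrib_left mult.assoc)

lemma form_app_idf: "form_app idf x y = (\<Sum>i\<in>UNIV. x i * y i)"
  unfolding form_app_def idf_def by (simp add: mult.assoc)

lemma psd_diag_nonneg: "psd A \<Longrightarrow> 0 \<le> A a a"
  unfolding psd_iff_form_app by (metis form_app_kd)

lemma psd_trace_zero:
  assumes sym: "sym_form A" and "psd A" and "tr A = 0"
  shows "A i j = 0"
proof -
  have diag: "A a a = 0" for a
    using assms(2,3) psd_diag_nonneg sum_nonneg_eq_0_iff[of UNIV "\<lambda>a. A a a"]
    unfolding tr_def by auto
  have "0 \<le> form_app A (\<lambda>k. kd i k + t * kd j k) (\<lambda>k. kd i k + t * kd j k)" for t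
    using \<open>psd A\<close> unfolding psd_iff_form_app by blast
  then have "0 \<le> 2 * t * A i j" for t
    using sym[unfolded sym_form_def, rule_format, of j i] diag
    unfolding form_app_add_scaled form_app_kd by simp
  from this[of 1] this[of "-1"] show ?thesis
    by simp
qed

lemma linear_le_quadratic_imp_eq_0:
  fixes U c :: real
  assumes "\<And>s. U * s \<le> c * s\<^sup>2"
  shows "U = 0"
proof -
  define s where "s = U / (\<bar>c\<bar> + 1)"
  have U: "U = (\<bar>c\<bar> + 1) * s"
    unfolding s_def by (simp add: add_nonneg_pos)
  have "(\<bar>c\<bar> + 1) * s\<^sup>2 \<le> c * s\<^sup>2"
    using assms[of s] unfolding U by (simp add: power2_eq_square mult.assoc)
  then have "(\<bar>c\<bar> + 1 - c) * s\<^sup>2 \<le> 0"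
    by (simp add: left_diff_distrib)
  moreover have "0 < \<bar>c\<bar> + 1 - c"
    using abs_ge_self[of c] by linarith
  ultimately have "s\<^sup>2 \<le> 0"
    by (simp add: mult_le_0_iff)
  then show ?thesis
    unfolding U by simp
qed

section \<open>Algebraic curvature tensors and PIC2\<close>

lemma complex_of_real_nonneg_iff [simp]: "0 \<le> complex_of_real r \<longleftrightarrow> 0 \<le> r"
  by (simp add: less_eq_complex_def)

lemma of_real_pos_mult_nonneg_iff: "0 < c \<Longrightarrow> 0 \<le> complex_of_real c * x \<longleftrightarrow> 0 \<le> x"
  by (simp add: less_eq_complex_def zero_le_mult_iff)

lemma mult_cnj_self_nonneg: "0 \<le> z * cnj z"
  by (simp add: less_eq_complex_def)

text \<open>With \<open>HOL-Library.Complex_Order\<close>, \<open>0 \<le> z\<close> means that \<open>z\<close> is a nonnegative real.\<close>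

lemma PIC2_iff: "R \<in> PIC2 \<longleftrightarrow> alg_curv R \<and> (\<forall>z w. 0 \<le> curv_cx R z w)"
  unfolding PIC2_def less_eq_complex_def by auto

lemma alg_curvD:
  assumes "alg_curv R"
  shows "R i j k l = - R j i k l" and "R i j k l = R k l i j"
    and "R i j k l + R j k i l + R k i j l = 0"
  using assms unfolding alg_curv_def by blast+

lemma alg_curv_add:
  assumes "alg_curv A" and "alg_curv B"
  shows "alg_curv (\<lambda>i j k l. A i j k l + B i j k l)"
  unfolding alg_curv_def
proof (intro conjI allI)
  fix i j k l
  from alg_curvD[OF assms(1), of i j k l] alg_curvD[OF assms(2), of i j k l]
  show "A i j k l + B i j k l = - (A j i k l + B j i k l)"
    and "A i j k l + B i j k l = A k l i j + B k l i j"
    and "A i j k l + B i j k l + (A j k i l + B j k i l) + (A k i j l + B k i j l) = 0"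
    by linarith+
qed

lemma alg_curv_KN_idf:
  assumes "sym_form H"
  shows "alg_curv (H \<odot> idf)"
  unfolding alg_curv_def KN_def idf_def
proof (intro conjI allI)
  fix i j k l
  have H: "H a b = H b a" for a b
    using assms unfolding sym_form_def by simp
  show "H i k * kd j l - H i l * kd j k - H j k * kd i l + H j l * kd i k =
       - (H j k * kd i l - H j l * kd i k - H i k * kd j l + H i l * kd j k)"
    by simp
  show "H i k * kd j l - H i l * kd j k - H j k * kd i l + H j l * kd i k =
       H k i * kd l j - H k j * kd l i - H l i * kd k j + H l j * kd k i"
    by (simp add: H[of k] H[of l] kd_sym[of l] kd_sym[of k])
  show "H i k * kd j l - H i l * kd j k - H j k * kd i l + H j l * kd i k +
       (H j i * kd k l - H j l * kd k i - H k i * kd j l + H k l * kd j i) +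
       (H k j * kd i l - H k l * kd i j - H i j * kd k l + H i l * kd k j) = 0"
    by (simp add: H[of j i] H[of k i] H[of k j] kd_sym[of k i] kd_sym[of j i] kd_sym[of k j])
qed

lemma curv_cx_add:
  "curv_cx (\<lambda>i j k l. A i j k l + B i j k l) z w = curv_cx A z w + curv_cx B z w"
  unfolding curv_cx_def by (simp add: distrib_left distrib_right sum.distrib)

lemma PIC2_add:
  assumes "A \<in> PIC2" and "B \<in> PIC2"
  shows "(\<lambda>i j k l. A i j k l + B i j k l) \<in> PIC2"
  using assms unfolding PIC2_iff by (simp add: alg_curv_add curv_cx_add add_nonneg_nonneg)

section \<open>H \<odot> id lies in PIC2\<close>

definition hinner :: "('n::finite \<Rightarrow> complex) \<Rightarrow> ('n \<Rightarrow> complex) \<Rightarrow> complex" where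
  "hinner x y = (\<Sum>i\<in>UNIV. x i * cnj (y i))"

definition sesq :: "('n::finite) bilin \<Rightarrow> ('n \<Rightarrow> complex) \<Rightarrow> ('n \<Rightarrow> complex) \<Rightarrow> complex" where
  "sesq A x y = (\<Sum>i\<in>UNIV. \<Sum>k\<in>UNIV. of_real (A i k) * x i * cnj (y k))"

lemma sum4_eq_sesq_mult:
  fixes A B :: "('n::finite) bilin"
  shows "(\<Sum>i\<in>UNIV. \<Sum>j\<in>UNIV. \<Sum>k\<in>UNIV. \<Sum>l\<in>UNIV.
      of_real (A i k * B j l) * a i * b j * cnj (c k) * cnj (d l)) = sesq A a c * sesq B b d"
proof -
  have "sesq A a c * sesq B b d = (\<Sum>i\<in>UNIV. \<Sum>j\<in>UNIV. \<Sum>k\<in>UNIV. \<Sum>l\<in>UNIV.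
      (of_real (A i k) * a i * cnj (c k)) * (of_real (B j l) * b j * cnj (d l)))"
    unfolding sesq_def sum_product ..
  then show ?thesis
    by (simp only: of_real_mult ac_simps)
qed

lemma curv_cx_KN:
  fixes A B :: "('n::finite) bilin"
  shows "curv_cx (A \<odot> B) z w = sesq A z z * sesq B w w - sesq A z w * sesq B w z
    - sesq A w z * sesq B z w + sesq A w w * sesq B z z"
proof -
  let ?t = "\<lambda>P. \<Sum>i\<in>UNIV. \<Sum>j\<in>UNIV. \<Sum>k\<in>UNIV. \<Sum>l\<in>UNIV.
      complex_of_real (P i j k l) * z i * w j * cnj (z k) * cnj (w l)"
  have split: "curv_cx (A \<odot> B) z w = ?t (\<lambda>i j k l. A i k * B j l) - ?t (\<lambda>i j k l. A i l * B j k)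
      - ?t (\<lambda>i j k l. A j k * B i l) + ?t (\<lambda>i j k l. A j l * B i k)"
    unfolding curv_cx_def KN_def
    by (simp add: algebra_simps sum.distrib sum_subtractf)
  have "?t (\<lambda>i j k l. A i l * B j k) = (\<Sum>i\<in>UNIV. \<Sum>j\<in>UNIV. \<Sum>l\<in>UNIV. \<Sum>k\<in>UNIV.
      complex_of_real (A i l * B j k) * z i * w j * cnj (w l) * cnj (z k))"
    by (rule sum.cong[OF refl], rule sum.cong[OF refl], subst sum.swap) (simp add: mult_ac)
  also have "\<dots> = sesq A z w * sesq B w z"
    by (rule sum4_eq_sesq_mult)
  finally have t2: "?t (\<lambda>i j k l. A i l * B j k) = sesq A z w * sesq B w z" .
  have "?t (\<lambda>i j k l. A j k * B i l) = (\<Sum>j\<in>UNIV. \<Sum>i\<in>UNIV. \<Sum>k\<in>UNIV. \<Sum>l\<in>UNIV.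
      complex_of_real (A j k * B i l) * w j * z i * cnj (z k) * cnj (w l))"
    by (subst sum.swap) (simp add: mult_ac)
  also have "\<dots> = sesq A w z * sesq B z w"
    by (rule sum4_eq_sesq_mult)
  finally have t3: "?t (\<lambda>i j k l. A j k * B i l) = sesq A w z * sesq B z w" .
  have "?t (\<lambda>i j k l. A j l * B i k) = (\<Sum>j\<in>UNIV. \<Sum>i\<in>UNIV. \<Sum>l\<in>UNIV. \<Sum>k\<in>UNIV.
      complex_of_real (A j l * B i k) * w j * z i * cnj (w l) * cnj (z k))"
    by (subst sum.swap, rule sum.cong[OF refl], rule sum.cong[OF refl], subst sum.swap) (simp add: mult_ac)
  also have "\<dots> = sesq A w w * sesq B z z"
    by (rule sum4_eq_sesq_mult)
  finally have t4: "?t (\<lambda>i j k l. A j l * B i k) = sesq A w w * sesq B z z" .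
  show ?thesis
    unfolding split t2 t3 t4 sum4_eq_sesq_mult ..
qed

lemma sesq_idf: "sesq idf x y = hinner x y"
  unfolding sesq_def idf_def hinner_def by (simp add: mult.assoc)

lemma cnj_hinner: "cnj (hinner x y) = hinner y x"
  unfolding hinner_def by (simp add: mult.commute)

lemma sum_cnj_mult: "(\<Sum>j\<in>UNIV. cnj (y j) * x j) = hinner x y"
  unfolding hinner_def by (simp add: mult.commute)

lemma sesq_nonneg:
  fixes T :: "('n::finite) bilin"
  assumes "sym_form T" and "psd T"
  shows "0 \<le> sesq T x x"
proof -
  let ?a = "\<lambda>i. Re (x i)" and ?b = "\<lambda>i. Im (x i)"
  have "Re (sesq T x x) = form_app T ?a ?a + form_app T ?b ?b"
    unfolding sesq_def form_app_def by (simp add: sum.distrib[symmetric] algebra_simps)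
  moreover have "Im (sesq T x x) = form_app T ?b ?a - form_app T ?a ?b"
    unfolding sesq_def form_app_def by (simp add: sum_subtractf[symmetric] algebra_simps)
  ultimately show ?thesis
    using assms form_app_sym[OF assms(1), of ?b ?a] unfolding psd_iff_form_app
    by (simp add: less_eq_complex_def)
qed

definition gram_det :: "('n::finite \<Rightarrow> complex) \<Rightarrow> ('n \<Rightarrow> complex) \<Rightarrow> complex" where
  "gram_det z w = hinner z z * hinner w w - hinner z w * hinner w z"

lemma gram_det_lagrange:
  "2 * gram_det z w = (\<Sum>i\<in>UNIV. \<Sum>j\<in>UNIV. (z i * w j - z j * w i) * cnj (z i * w j - z j * w i))"
proof -
  have "(\<Sum>i\<in>UNIV. \<Sum>j\<in>UNIV. (z i * w j - z j * w i) * cnj (z i * w j - z j * w i))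
     = (\<Sum>i\<in>UNIV. \<Sum>j\<in>UNIV. (z i * cnj (z i)) * (w j * cnj (w j)))
     - (\<Sum>i\<in>UNIV. \<Sum>j\<in>UNIV. (z i * cnj (w i)) * (w j * cnj (z j)))
     - (\<Sum>i\<in>UNIV. \<Sum>j\<in>UNIV. (w i * cnj (z i)) * (z j * cnj (w j)))
     + (\<Sum>i\<in>UNIV. \<Sum>j\<in>UNIV. (w i * cnj (w i)) * (z j * cnj (z j)))"
    by (simp add: sum_subtractf[symmetric] sum.distrib[symmetric] algebra_simps)
  also have "\<dots> = 2 * gram_det z w"
    unfolding gram_det_def hinner_def sum_product[symmetric] by (simp add: algebra_simps)
  finally show ?thesis ..
qed

lemma gram_det_nonneg: "0 \<le> gram_det z w"
proof -
  have "0 \<le> 2 * gram_det z w"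
    unfolding gram_det_lagrange by (intro sum_nonneg mult_cnj_self_nonneg)
  then show ?thesis
    by (simp add: less_eq_complex_def)
qed

text \<open>\<open>plane_proj z w\<close> is \<open>gram_det z w\<close> times the matrix of the orthogonal projection onto
  the span of \<open>z\<close> and \<open>w\<close>.\<close>

definition plane_proj :: "('n::finite \<Rightarrow> complex) \<Rightarrow> ('n \<Rightarrow> complex) \<Rightarrow> 'n \<Rightarrow> 'n \<Rightarrow> complex" where
  "plane_proj z w i k = hinner w w * z i * cnj (z k) - hinner w z * z i * cnj (w k)
      - hinner z w * w i * cnj (z k) + hinner z z * w i * cnj (w k)"

lemma curv_cx_KN_idf:
  "curv_cx (H \<odot> idf) z w = (\<Sum>i\<in>UNIV. \<Sum>k\<in>UNIV. of_real (H i k) * plane_proj z w i k)"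
  unfolding curv_cx_KN sesq_idf unfolding plane_proj_def sesq_def
  by (simp add: algebra_simps sum.distrib sum_subtractf sum_distrib_left sum_distrib_right)

lemma cnj_plane_proj: "cnj (plane_proj z w i k) = plane_proj z w k i"
  unfolding plane_proj_def by (simp add: cnj_hinner algebra_simps)

lemma trace_plane_proj: "(\<Sum>i\<in>UNIV. plane_proj z w i i) = 2 * gram_det z w"
  unfolding plane_proj_def mult.assoc sum.distrib sum_subtractf sum_distrib_left[symmetric]
    hinner_def[symmetric] gram_det_def
  by (simp add: algebra_simps)

lemma plane_proj_square:
  "(\<Sum>j\<in>UNIV. plane_proj z w i j * plane_proj z w j k) = gram_det z w * plane_proj z w i k"
proof -
  define \<alpha> where "\<alpha> j = hinner w w * cnj (z j) - hinner w z * cnj (w j)" for j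
  define \<beta> where "\<beta> j = hinner z z * cnj (w j) - hinner z w * cnj (z j)" for j
  have G: "plane_proj z w i j = z i * \<alpha> j + w i * \<beta> j" for i j
    unfolding plane_proj_def \<alpha>_def \<beta>_def by (simp add: algebra_simps)
  have \<alpha>z: "(\<Sum>j\<in>UNIV. \<alpha> j * z j) = gram_det z w"
    and \<alpha>w: "(\<Sum>j\<in>UNIV. \<alpha> j * w j) = 0"
    and \<beta>z: "(\<Sum>j\<in>UNIV. \<beta> j * z j) = 0"
    and \<beta>w: "(\<Sum>j\<in>UNIV. \<beta> j * w j) = gram_det z w"
    unfolding \<alpha>_def \<beta>_def left_diff_distrib sum_subtractf mult.assoc sum_distrib_left[symmetric]
      sum_cnj_mult gram_det_def
    by (simp_all add: mult.commute)
  have "(\<Sum>j\<in>UNIV. plane_proj z w i j * plane_proj z w j k) =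
      z i * \<alpha> k * (\<Sum>j\<in>UNIV. \<alpha> j * z j) + z i * \<beta> k * (\<Sum>j\<in>UNIV. \<alpha> j * w j)
      + w i * \<alpha> k * (\<Sum>j\<in>UNIV. \<beta> j * z j) + w i * \<beta> k * (\<Sum>j\<in>UNIV. \<beta> j * w j)"
    unfolding G by (simp add: algebra_simps sum.distrib sum_distrib_left)
  then show ?thesis
    unfolding \<alpha>z \<alpha>w \<beta>z \<beta>w G by (simp add: algebra_simps)
qed

lemma hermitian_square_zero:
  fixes K :: "'n::finite \<Rightarrow> 'n \<Rightarrow> complex"
  assumes herm: "\<And>i k. cnj (K i k) = K k i"
    and sq: "\<And>i. (\<Sum>j\<in>UNIV. K i j * K j i) = 0"
  shows "K i k = 0"
proof -
  have "(\<Sum>j\<in>UNIV. complex_of_real ((cmod (K i j))\<^sup>2)) = 0"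
    using sq[of i] by (simp only: complex_norm_square herm)
  then have "(\<Sum>j\<in>UNIV. (cmod (K i j))\<^sup>2) = 0"
    by (metis of_real_sum of_real_eq_0_iff)
  then show ?thesis
    by (simp add: sum_nonneg_eq_0_iff)
qed

lemma sum_psd_mult_idempotent_nonneg:
  fixes T :: "('n::finite) bilin" and K :: "'n \<Rightarrow> 'n \<Rightarrow> complex"
  assumes "sym_form T" and "psd T" and "c > 0"
    and herm: "\<And>i k. cnj (K i k) = K k i"
    and idem: "\<And>i k. (\<Sum>j\<in>UNIV. K i j * K j k) = of_real c * K i k"
  shows "0 \<le> (\<Sum>i\<in>UNIV. \<Sum>k\<in>UNIV. of_real (T i k) * K i k)"
proof -
  have "of_real c * (\<Sum>i\<in>UNIV. \<Sum>k\<in>UNIV. of_real (T i k) * K i k)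
      = (\<Sum>i\<in>UNIV. \<Sum>k\<in>UNIV. of_real (T i k) * (of_real c * K i k))"
    by (simp add: sum_distrib_left mult_ac)
  also have "\<dots> = (\<Sum>i\<in>UNIV. \<Sum>k\<in>UNIV. \<Sum>j\<in>UNIV. of_real (T i k) * K i j * cnj (K k j))"
    by (simp add: idem[symmetric] herm sum_distrib_left mult.assoc)
  also have "\<dots> = (\<Sum>j\<in>UNIV. sesq T (\<lambda>i. K i j) (\<lambda>i. K i j))"
    unfolding sesq_def by (subst sum.swap, rule sum.cong[OF refl], subst sum.swap) simp
  finally have "0 \<le> of_real c * (\<Sum>i\<in>UNIV. \<Sum>k\<in>UNIV. of_real (T i k) * K i k)"
    using assms(1,2) by (simp add: sum_nonneg sesq_nonneg)
  then show ?thesis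
    using \<open>c > 0\<close> by (simp add: of_real_pos_mult_nonneg_iff)
qed

lemma idempotent_complement:
  fixes G :: "'n::finite \<Rightarrow> 'n \<Rightarrow> complex"
  assumes "\<And>i k. (\<Sum>j\<in>UNIV. G i j * G j k) = \<gamma> * G i k"
  shows "(\<Sum>j\<in>UNIV. (\<gamma> * of_real (idf i j) - G i j) * (\<gamma> * of_real (idf j k) - G j k))
    = \<gamma> * (\<gamma> * of_real (idf i k) - G i k)"
proof -
  have "(\<Sum>j\<in>UNIV. (\<gamma> * of_real (idf i j) - G i j) * (\<gamma> * of_real (idf j k) - G j k))
      = \<gamma> * \<gamma> * (\<Sum>j\<in>UNIV. of_real (kd i j) * of_real (kd j k))
        - \<gamma> * (\<Sum>j\<in>UNIV. of_real (kd i j) * G j k) - \<gamma> * (\<Sum>j\<in>UNIV. G i j * of_real (kd j k))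
        + (\<Sum>j\<in>UNIV. G i j * G j k)"
    unfolding idf_def
    by (simp add: algebra_simps sum.distrib sum_subtractf sum_distrib_left del: sum_kd_left sum_kd_right)
  also have "\<dots> = \<gamma> * (\<gamma> * of_real (idf i k) - G i k)"
    unfolding sum_kd_left sum_kd_right assms idf_def by (simp add: algebra_simps)
  finally show ?thesis .
qed

lemma KN_dual_pairing:
  fixes H :: "('n::finite) bilin" and G :: "'n \<Rightarrow> 'n \<Rightarrow> complex"
  assumes "(\<Sum>i\<in>UNIV. G i i) = 2 * \<gamma>"
  shows "(\<Sum>i\<in>UNIV. \<Sum>k\<in>UNIV. of_real (tr H * idf i k - (real CARD('n) - 2) * H i k)
      * (\<gamma> * of_real (idf i k) - G i k))
    = of_real (real CARD('n) - 2) * (\<Sum>i\<in>UNIV. \<Sum>k\<in>UNIV. of_real (H i k) * G i k)"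
proof -
  define N where "N = real CARD('n) - 2"
  have "(\<Sum>i\<in>UNIV. \<Sum>k\<in>UNIV. of_real (tr H * idf i k - N * H i k) * (\<gamma> * of_real (idf i k) - G i k))
      = of_real (tr H) * \<gamma> * (\<Sum>i\<in>UNIV. \<Sum>k\<in>UNIV. of_real (kd (i::'n) k) * of_real (kd i k))
        - of_real (tr H) * (\<Sum>i\<in>UNIV. \<Sum>k\<in>UNIV. of_real (kd i k) * G i k)
        - of_real N * \<gamma> * (\<Sum>i\<in>UNIV. \<Sum>k\<in>UNIV. of_real (H i k) * of_real (kd i k))
        + of_real N * (\<Sum>i\<in>UNIV. \<Sum>k\<in>UNIV. of_real (H i k) * G i k)"
    unfolding idf_def
    by (simp add: algebra_simps sum.distrib sum_subtractf sum_distrib_left del: sum_kd_left sum_kd_right)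
  also have "\<dots> = of_real N * (\<Sum>i\<in>UNIV. \<Sum>k\<in>UNIV. of_real (H i k) * G i k)"
    using assms unfolding tr_def by (simp add: N_def algebra_simps)
  finally show ?thesis
    unfolding N_def .
qed

lemma KN_idf_curv_cx_nonneg:
  fixes H :: "('n::finite) bilin"
  assumes "sym_form H" and "CARD('n) \<ge> 3"
    and psd: "psd (\<lambda>i j. tr H * idf i j - (real CARD('n) - 2) * H i j)"
  shows "0 \<le> curv_cx (H \<odot> idf) z w"
proof -
  define G where "G = plane_proj z w"
  obtain r where "r \<ge> 0" and r: "gram_det z w = of_real r"
    using gram_det_nonneg nonnegative_complex_is_real by (metis Reals_cases complex_of_real_nonneg_iff)
  have curv: "curv_cx (H \<odot> idf) z w = (\<Sum>i\<in>UNIV. \<Sum>k\<in>UNIV. of_real (H i k) * G i k)"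
    unfolding G_def by (rule curv_cx_KN_idf)
  have herm: "\<And>i k. cnj (G i k) = G k i"
    and sq: "\<And>i k. (\<Sum>j\<in>UNIV. G i j * G j k) = of_real r * G i k"
    unfolding G_def by (simp_all add: cnj_plane_proj plane_proj_square r)
  show ?thesis
  proof (cases "r = 0")
    case True
    then have "G i k = 0" for i k
      using hermitian_square_zero[of G] herm sq by simp
    then show ?thesis
      unfolding curv by simp
  next
    case False
    define K where "K i k = of_real r * of_real (idf i k) - G i k" for i k
    have "of_real (real CARD('n) - 2) * curv_cx (H \<odot> idf) z w
        = (\<Sum>i\<in>UNIV. \<Sum>k\<in>UNIV. of_real (tr H * idf i k - (real CARD('n) - 2) * H i k) * K i k)"
      using KN_dual_pairing[of G "of_real r" H] trace_plane_proj[of z w]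
      unfolding curv K_def G_def r by simp
    moreover have "0 \<le> (\<Sum>i\<in>UNIV. \<Sum>k\<in>UNIV. of_real (tr H * idf i k - (real CARD('n) - 2) * H i k) * K i k)"
    proof (rule sum_psd_mult_idempotent_nonneg[OF _ psd])
      show "sym_form (\<lambda>i j. tr H * idf i j - (real CARD('n) - 2) * H i j)"
        using assms(1) unfolding sym_form_def idf_def kd_def by simp
      show "r > 0"
        using \<open>r \<ge> 0\<close> False by simp
      show "cnj (K i k) = K k i" for i k
        unfolding K_def by (simp add: herm idf_def kd_def)
      show "(\<Sum>j\<in>UNIV. K i j * K j k) = of_real r * K i k" for i k
        unfolding K_def by (rule idempotent_complement[OF sq])
    qed
    moreover have "real CARD('n) - 2 > 0"
      using assms(2) by simp
    ultimately show ?thesis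
      by (metis of_real_pos_mult_nonneg_iff)
  qed
qed

lemma KN_idf_in_PIC2:
  fixes H :: "('n::finite) bilin"
  assumes "sym_form H" and "CARD('n) \<ge> 3"
    and "psd (\<lambda>i j. tr H * idf i j - (real CARD('n) - 2) * H i j)"
  shows "H \<odot> idf \<in> PIC2"
  using assms unfolding PIC2_iff by (simp add: alg_curv_KN_idf KN_idf_curv_cx_nonneg)

section \<open>Jacobi operators\<close>

definition sec_curv :: "('n::finite) tensor4 \<Rightarrow> ('n \<Rightarrow> real) \<Rightarrow> ('n \<Rightarrow> real) \<Rightarrow> real" where
  "sec_curv R x y = (\<Sum>i\<in>UNIV. \<Sum>j\<in>UNIV. \<Sum>k\<in>UNIV. \<Sum>l\<in>UNIV. R i j k l * x i * y j * x k * y l)"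

definition jacobi :: "('n::finite) tensor4 \<Rightarrow> ('n \<Rightarrow> real) \<Rightarrow> 'n bilin" where
  "jacobi R x j l = (\<Sum>i\<in>UNIV. \<Sum>k\<in>UNIV. R i j k l * x i * x k)"

lemma sec_curv_nonneg_if_PIC2:
  assumes "R \<in> PIC2"
  shows "0 \<le> sec_curv R x y"
proof -
  have "curv_cx R (\<lambda>i. of_real (x i)) (\<lambda>i. of_real (y i)) = of_real (sec_curv R x y)"
    unfolding curv_cx_def sec_curv_def by simp
  then show ?thesis
    using assms unfolding PIC2_iff by (metis complex_of_real_nonneg_iff)
qed

lemma form_app_jacobi: "form_app (jacobi R x) y y = sec_curv R x y"
proof -
  have "form_app (jacobi R x) y y =
      (\<Sum>j\<in>UNIV. \<Sum>l\<in>UNIV. \<Sum>i\<in>UNIV. \<Sum>k\<in>UNIV. R i j k l * x i * y j * x k * y l)"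
    unfolding form_app_def jacobi_def by (simp add: sum_distrib_left sum_distrib_right mult_ac)
  also have "\<dots> = sec_curv R x y"
    unfolding sec_curv_def
    by (subst sum.swap, rule sum.cong[OF refl], subst (2) sum.swap, subst sum.swap) simp
  finally show ?thesis .
qed

lemma tr_jacobi: "tr (jacobi R x) = form_app (Ric R) x x"
  unfolding tr_def jacobi_def form_app_def Ric_def
  by (subst sum.swap, rule sum.cong[OF refl], subst sum.swap) (simp add: sum_distrib_right)

lemma sym_form_jacobi:
  assumes "alg_curv R"
  shows "sym_form (jacobi R x)"
  unfolding sym_form_def jacobi_def
proof (intro allI)
  fix j l
  show "(\<Sum>i\<in>UNIV. \<Sum>k\<in>UNIV. R i j k l * x i * x k) = (\<Sum>i\<in>UNIV. \<Sum>k\<in>UNIV. R i l k j * x i * x k)"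
    by (subst sum.swap) (simp add: alg_curvD(2)[OF assms, of _ j _ l] mult_ac)
qed

lemma psd_jacobi_if_PIC2: "R \<in> PIC2 \<Longrightarrow> psd (jacobi R x)"
  unfolding psd_iff_form_app form_app_jacobi by (simp add: sec_curv_nonneg_if_PIC2)

lemma Ric_form_nonneg_if_PIC2: "R \<in> PIC2 \<Longrightarrow> 0 \<le> form_app (Ric R) x x"
  unfolding tr_jacobi[symmetric] tr_def by (simp add: sum_nonneg psd_diag_nonneg psd_jacobi_if_PIC2)

lemma form_app_Ric_add:
  "form_app (Ric (\<lambda>i j k l. A i j k l + B i j k l)) x x = form_app (Ric A) x x + form_app (Ric B) x x"
  unfolding form_app_def Ric_def by (simp add: algebra_simps sum.distrib)

lemma PIC2_Ric_form_add_eq_0D: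
  assumes "A \<in> PIC2" and "B \<in> PIC2"
    and "form_app (Ric (\<lambda>i j k l. A i j k l + B i j k l)) x x = 0"
  shows "form_app (Ric A) x x = 0" and "form_app (Ric B) x x = 0"
  using assms(3) Ric_form_nonneg_if_PIC2[OF assms(1), of x] Ric_form_nonneg_if_PIC2[OF assms(2), of x]
  unfolding form_app_Ric_add by linarith+

lemma jacobi_eq_0_if_PIC2_Ric_form_eq_0:
  assumes "R \<in> PIC2" and "form_app (Ric R) x x = 0"
  shows "jacobi R x j l = 0"
proof (rule psd_trace_zero)
  show "sym_form (jacobi R x)"
    using assms(1) unfolding PIC2_iff by (simp add: sym_form_jacobi)
  show "psd (jacobi R x)"
    using assms(1) by (rule psd_jacobi_if_PIC2)
  show "tr (jacobi R x) = 0"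
    using assms(2) by (simp add: tr_jacobi)
qed

lemma alg_curv_eq_0_if_jacobi_eq_0:
  assumes "alg_curv R" and jac: "\<And>x j l. jacobi R x j l = 0"
  shows "R i j k l = 0"
proof -
  have jac_kd: "jacobi R (\<lambda>i. kd a i + kd b i) j l = R a j a l + R a j b l + R b j a l + R b j b l"
    for a b j l
    unfolding jacobi_def by (simp only: distrib_left distrib_right sum.distrib) simp
  \<comment> \<open>polarisation; with skew-symmetry in the first two slots, Bianchi then reads \<open>3 R = 0\<close>\<close>
  have skew: "R a j b l = - R b j a l" for a j b l
    using jac[of "\<lambda>i. kd a i + kd b i" j l] jac[of "\<lambda>i. kd a i"] jac[of "\<lambda>i. kd b i"]
    unfolding jac_kd by (simp add: jacobi_def)
  have "R j k i l = R i j k l" and "R k i j l = R i j k l"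
    using skew[of k j i l] skew[of k i j l] alg_curvD(1)[OF assms(1), of j _ _ l] by simp_all
  then show ?thesis
    using alg_curvD(3)[OF assms(1), of i j k l] by simp
qed

lemma PIC2_Ric_eq_0_imp_eq_0:
  assumes "R \<in> PIC2" and "\<And>i k. Ric R i k = 0"
  shows "R i j k l = 0"
proof (rule alg_curv_eq_0_if_jacobi_eq_0)
  show "alg_curv R"
    using assms(1) unfolding PIC2_iff ..
  show "jacobi R x j l = 0" for x j l
    using assms by (intro jacobi_eq_0_if_PIC2_Ric_form_eq_0) (simp_all add: form_app_def)
qed

lemma Einstein_PIC2_Ric_null_imp_eq_0:
  fixes S :: "('n::finite) tensor4"
  assumes "S \<in> PIC2" and "Ric0 S = (\<lambda>i k. 0)"
    and "(\<Sum>i\<in>UNIV. v i * v i) = 1" and "form_app (Ric S) v v = 0"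
  shows "S i j k l = 0"
proof (rule PIC2_Ric_eq_0_imp_eq_0[OF assms(1)])
  define a where "a = scal S / real CARD('n)"
  have Ric: "Ric S i k = a * idf i k" for i k
    using fun_cong[OF fun_cong[OF assms(2), of i], of k] unfolding Ric0_def a_def by simp
  have "form_app (Ric S) v v = a * (\<Sum>i\<in>UNIV. v i * v i)"
    unfolding Ric form_app_scaled form_app_idf ..
  then have "a = 0"
    using assms(3,4) by simp
  then show "Ric S i k = 0" for i k
    by (simp add: Ric)
qed

section \<open>Ricci-null directions of H \<odot> id\<close>

lemma jacobi_KN_idf:
  assumes "sym_form H"
  shows "jacobi (H \<odot> idf) v j l = form_app H v v * kd j l
     - (\<Sum>i\<in>UNIV. H i l * v i) * v j - (\<Sum>i\<in>UNIV. H i j * v i) * v l + H j l * (\<Sum>i\<in>UNIV. v i * v i)"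
proof -
  have H: "H a b = H b a" for a b
    using assms unfolding sym_form_def by simp
  have "jacobi (H \<odot> idf) v j l = (\<Sum>i\<in>UNIV. \<Sum>k\<in>UNIV. H i k * v i * v k) * kd j l
     - (\<Sum>i\<in>UNIV. \<Sum>k\<in>UNIV. H i l * v i * v k * kd j k)
     - (\<Sum>i\<in>UNIV. \<Sum>k\<in>UNIV. H j k * v k * v i * kd i l)
     + H j l * (\<Sum>i\<in>UNIV. \<Sum>k\<in>UNIV. v i * v k * kd i k)"
    unfolding jacobi_def KN_def idf_def
    by (simp add: algebra_simps sum.distrib sum_subtractf sum_distrib_left sum_distrib_right
        del: sum_kd_left_real sum_kd_right_real)
  moreover have "(\<Sum>i\<in>UNIV. \<Sum>k\<in>UNIV. H i l * v i * v k * kd j k) = (\<Sum>i\<in>UNIV. H i l * v i) * v j"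
    by (simp add: sum_distrib_right)
  moreover have "(\<Sum>i\<in>UNIV. \<Sum>k\<in>UNIV. H j k * v k * v i * kd i l) = (\<Sum>i\<in>UNIV. H i j * v i) * v l"
    by (subst sum.swap) (simp add: sum_distrib_right H[of j])
  ultimately show ?thesis
    unfolding form_app_def by simp
qed

lemma KN_idf_jacobi_eq_0_decomp:
  assumes "sym_form H" and unit: "(\<Sum>i\<in>UNIV. v i * v i) = 1"
    and jac: "\<And>j l. jacobi (H \<odot> idf) v j l = 0"
  obtains u c where "(\<Sum>i\<in>UNIV. u i * v i) = 0"
    and "\<And>j l. H j l = c * kd j l + u j * v l + v j * u l - 2 * c * v j * v l"
proof
  define h where "h l = (\<Sum>i\<in>UNIV. H i l * v i)" for l
  have "(\<Sum>i\<in>UNIV. h i * v i) = (\<Sum>i\<in>UNIV. \<Sum>k\<in>UNIV. H k i * v k * v i)"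
    unfolding h_def by (simp add: sum_distrib_right)
  also have "\<dots> = form_app H v v"
    unfolding form_app_def by (rule sum.swap)
  finally show "(\<Sum>i\<in>UNIV. (h i - form_app H v v * v i) * v i) = 0"
    by (simp add: left_diff_distrib sum_subtractf sum_distrib_left[symmetric] mult.assoc unit)
  show "H j l = - form_app H v v * kd j l + (h j - form_app H v v * v j) * v l
      + v j * (h l - form_app H v v * v l) - 2 * - form_app H v v * v j * v l" for j l
    using jac[of j l] unfolding jacobi_KN_idf[OF assms(1)] unit h_def
    by (simp add: algebra_simps)
qed

lemma psd_KN_dual_decomp:
  fixes H :: "('n::finite) bilin" and u v :: "'n \<Rightarrow> real"
  assumes "CARD('n) \<ge> 3" and unit: "(\<Sum>i\<in>UNIV. v i * v i) = 1" and uv: "(\<Sum>i\<in>UNIV. u i * v i) = 0"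
    and H: "\<And>j l. H j l = c * kd j l + u j * v l + v j * u l - 2 * c * v j * v l"
    and psd: "psd (\<lambda>i j. tr H * idf i j - (real CARD('n) - 2) * H i j)"
  shows "u i = 0" and "c \<ge> 0"
proof -
  define N where "N = real CARD('n) - 2"
  have "N > 0"
    using assms(1) unfolding N_def by simp
  have "tr H = c * real CARD('n) + 2 * (\<Sum>i\<in>UNIV. u i * v i) - 2 * c * (\<Sum>i\<in>UNIV. v i * v i)"
    unfolding tr_def H by (simp add: sum.distrib sum_subtractf sum_distrib_left algebra_simps kd_def)
  then have trH: "tr H = N * c"
    unfolding uv unit N_def by (simp add: algebra_simps)
  have T: "tr H * idf j l - N * H j l = 2 * N * c * (v j * v l) - N * (u j * v l) - N * (v j * u l)" for j l
    unfolding trH H idf_def by (simp add: algebra_simps)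
  have quad: "form_app (\<lambda>j l. tr H * idf j l - N * H j l) x x = 2 * N * c * form_app (\<lambda>j l. v j * v l) x x
      - N * form_app (\<lambda>j l. u j * v l) x x - N * form_app (\<lambda>j l. v j * u l) x x" for x
    unfolding T form_app_def by (simp add: algebra_simps sum_subtractf sum.distrib sum_distrib_left)
  define U where "U = (\<Sum>i\<in>UNIV. u i * u i)"
  have lin_quad: "U * s \<le> c * s\<^sup>2" for s
  proof -
    let ?x = "\<lambda>i. u i + s * v i"
    have "(\<Sum>i\<in>UNIV. v i * ?x i) = (\<Sum>i\<in>UNIV. u i * v i) + s * (\<Sum>i\<in>UNIV. v i * v i)"
      and "(\<Sum>i\<in>UNIV. u i * ?x i) = U + s * (\<Sum>i\<in>UNIV. u i * v i)"
      unfolding U_def by (simp_all add: algebra_simps sum.distrib sum_distrib_left)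
    then have vx: "(\<Sum>i\<in>UNIV. v i * ?x i) = s" and ux: "(\<Sum>i\<in>UNIV. u i * ?x i) = U"
      unfolding uv unit by simp_all
    have "0 \<le> form_app (\<lambda>j l. tr H * idf j l - N * H j l) ?x ?x"
      using psd unfolding psd_iff_form_app N_def by blast
    also have "\<dots> = (2 * N) * (c * s\<^sup>2 - U * s)"
      unfolding quad form_app_outer vx ux by (simp add: algebra_simps power2_eq_square)
    finally show ?thesis
      using \<open>N > 0\<close> by (simp add: zero_le_mult_iff)
  qed
  then have "U = 0"
    by (rule linear_le_quadratic_imp_eq_0)
  then show "u i = 0"
    unfolding U_def by (simp add: sum_nonneg_eq_0_iff)
  show "c \<ge> 0"
    using lin_quad[of 1] \<open>U = 0\<close> by simp
qed

lemma KN_idf_jacobi_eq_0_cylinder: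
  fixes H :: "('n::finite) bilin" and v :: "'n \<Rightarrow> real"
  assumes "sym_form H" and "CARD('n) \<ge> 3" and unit: "(\<Sum>i\<in>UNIV. v i * v i) = 1"
    and jac: "\<And>j l. jacobi (H \<odot> idf) v j l = 0"
    and psd: "psd (\<lambda>i j. tr H * idf i j - (real CARD('n) - 2) * H i j)"
  obtains c where "c \<ge> 0" and "\<And>j l. H j l = c * (idf j l - 2 * v j * v l)"
proof -
  obtain u c where uv: "(\<Sum>i\<in>UNIV. u i * v i) = 0"
    and H: "\<And>j l. H j l = c * kd j l + u j * v l + v j * u l - 2 * c * v j * v l"
    using KN_idf_jacobi_eq_0_decomp[OF assms(1) unit jac] by blast
  note decomp = psd_KN_dual_decomp[OF assms(2) unit uv H psd]
  show ?thesis
    using that[OF decomp(2)] H decomp(1) by (simp add: idf_def algebra_simps)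
qed

theorem proposition2p3:
  fixes R :: "('n::finite) tensor4"
  assumes "CARD('n) \<ge> 5"
    and "R \<in> C_cone 1 0"
  shows "R \<in> PIC2 \<and>
    (\<forall>v::'n \<Rightarrow> real. (\<Sum>i\<in>UNIV. v i ^ 2) = 1 \<longrightarrow>
        (\<Sum>i\<in>UNIV. \<Sum>k\<in>UNIV. Ric R i k * v i * v k) = 0 \<longrightarrow>
        (\<exists>c::real. c \<ge> 0 \<and> R = (\<lambda>i j k l. c * (((\<lambda>a b. idf a b - 2 * v a * v b) \<odot> idf) i j k l))))"
proof -
  obtain S H where S: "S \<in> PIC2" "Ric0 S = (\<lambda>i k. 0)" and H: "sym_form H"
    and psd: "psd (\<lambda>i j. tr H * idf i j - (real CARD('n) - 2) * H i j)"
    and R: "R = (\<lambda>i j k l. S i j k l + (H \<odot> idf) i j k l)"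
    using assms(2) unfolding C_cone_def by auto
  have n: "CARD('n) \<ge> 3"
    using assms(1) by simp
  have K: "H \<odot> idf \<in> PIC2"
    using KN_idf_in_PIC2[OF H n psd] .
  have "\<exists>c\<ge>0. R = (\<lambda>i j k l. c * (((\<lambda>a b. idf a b - 2 * v a * v b) \<odot> idf) i j k l))"
    if "(\<Sum>i\<in>UNIV. v i ^ 2) = 1" and "(\<Sum>i\<in>UNIV. \<Sum>k\<in>UNIV. Ric R i k * v i * v k) = 0" for v
  proof -
    have unit: "(\<Sum>i\<in>UNIV. v i * v i) = 1" and "form_app (Ric R) v v = 0"
      using that by (simp_all add: power2_eq_square form_app_def)
    note Ric_null = PIC2_Ric_form_add_eq_0D[OF S(1) K this(2)[unfolded R]]
    obtain c where "c \<ge> 0" and Hc: "\<And>j l. H j l = c * (idf j l - 2 * v j * v l)"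
      using KN_idf_jacobi_eq_0_cylinder[OF H n unit jacobi_eq_0_if_PIC2_Ric_form_eq_0[OF K Ric_null(2)] psd] by blast
    have "S i j k l = 0" for i j k l
      using Einstein_PIC2_Ric_null_imp_eq_0[OF S unit Ric_null(1)] .
    then have "R = (\<lambda>i j k l. c * (((\<lambda>a b. idf a b - 2 * v a * v b) \<odot> idf) i j k l))"
      unfolding R KN_def by (simp add: Hc algebra_simps)
    with \<open>c \<ge> 0\<close> show ?thesis
      by blast
  qed
  then show ?thesis
    using PIC2_add[OF S(1) K] unfolding R by blast
qed

end
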